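(* Fix a logistic circuit structure over Boolean variables $X_1,\dots,X_k$ and a dataset $\{(\mathbf{x}^{(j)},y^{(j)})\}_{j=1}^N$ with $\mathbf{x}^{(j)}\in[0,1]^k$ and $y^{(j)}\in\{0,1\}$. Let $p_\theta(\mathbf{x})$ denote the probability $\Pr(Y=1\mid\mathbf{x})$ defined by the logistic circuit with parameter vector $\theta$ (the OR-gate wire parameters). Then the cross-entropy loss $L(\theta)=-\sum_{j=1}^N\bigl[y^{(j)}\log p_\theta(\mathbf{x}^{(j)})+(1-y^{(j)})\log(1-p_\theta(\mathbf{x}^{(j)}))\bigr]$ is a convex function of $\theta$.
   Context: A logical circuit over Boolean variables $X_1,\dots,X_k$ is a rooted directed acyclic graph whose leaves are literals $X_i$ or $\neg X_i$ and whose inner nodes are AND gates or OR gates; each node represents a logical sentence. An AND gate is decomposable if its inputs mention pairwise disjoint sets of variables; an OR gate is deterministic if for every complete assignment at most one of its inputs is satisfied. A logistic circuit is a logical circuit whose root is an OR gate, with all AND gates decomposable and all OR gates deterministic, together with a real parameter on each input wire of each OR gate. For $\mathbf{x}\in[0,1]^k$, $\Pr_{\mathbf{x}}$ is the fully factorized distribution with $\Pr_{\mathbf{x}}(X_i=1)=x_i$, and $\Pr_{\mathbf{x}}(n)$ is the probability of the sentence of node $n$. For an OR gate $n$ with child $c$, the flow is $f(n,\mathbf{x},c)=\Pr_{\mathbf{x}}(c)/\Pr_{\mathbf{x}}(n)$ (taken to be $0$ if $\Pr_{\mathbf{x}}(n)=0$). The weight function: $g_n(\mathbf{x})=0$ for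 a leaf; $g_n(\mathbf{x})=\sum_i g_{c_i}(\mathbf{x})$ for an AND gate with children $c_i$; $g_n(\mathbf{x})=\sum_i f(n,\mathbf{x},c_i)(g_{c_i}(\mathbf{x})+\theta_i)$ for an OR gate with inputs $(c_i,\theta_i)$. With root $r$, $\Pr(Y=1\mid\mathbf{x})=1/(1+\exp(-g_r(\mathbf{x})))$. *)

theory Defs
  imports "HOL-Analysis.Analysis"
begin

text \<open>Variables X_1..X_k are indexed 0..k-1. A circuit is a finite DAG given by a node
set V, a labelling lab of nodes by gates (children given as lists, so wires are
positions in the list), and a root r. Parameters live on wires (n, i) = i-th input of
OR gate n.\<close>

datatype 'n gate = Lit nat bool | AndG "'n list" | OrG "'n list"

definition children :: "('n \<Rightarrow> 'n gate) \<Rightarrow> 'n \<Rightarrow> 'n list" where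
  "children lab n = (case lab n of Lit _ _ \<Rightarrow> [] | AndG cs \<Rightarrow> cs | OrG cs \<Rightarrow> cs)"

definition circuit_dag :: "nat \<Rightarrow> 'n set \<Rightarrow> ('n \<Rightarrow> 'n gate) \<Rightarrow> 'n \<Rightarrow> bool" where
  "circuit_dag k V lab r \<longleftrightarrow> finite V \<and> r \<in> V
     \<and> (\<forall>n\<in>V. set (children lab n) \<subseteq> V)
     \<and> (\<forall>n\<in>V. \<forall>i b. lab n = Lit i b \<longrightarrow> i < k)
     \<and> wf {(c, n). n \<in> V \<and> c \<in> set (children lab n)}"

text \<open>Evaluation by recursion on a fuel parameter; with fuel card V every node of an
acyclic circuit on V is evaluated completely.\<close>

fun sat_f :: "nat \<Rightarrow> ('n \<Rightarrow> 'n gate) \<Rightarrow> (nat \<Rightarrow> bool) \<Rightarrow> 'n \<Rightarrow> bool" where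
  "sat_f 0 lab a n = False"
| "sat_f (Suc d) lab a n = (case lab n of
      Lit i b \<Rightarrow> a i = b
    | AndG cs \<Rightarrow> (\<forall>c\<in>set cs. sat_f d lab a c)
    | OrG cs \<Rightarrow> (\<exists>c\<in>set cs. sat_f d lab a c))"

definition sat :: "'n set \<Rightarrow> ('n \<Rightarrow> 'n gate) \<Rightarrow> (nat \<Rightarrow> bool) \<Rightarrow> 'n \<Rightarrow> bool" where
  "sat V lab a n = sat_f (card V) lab a n"

fun vars_f :: "nat \<Rightarrow> ('n \<Rightarrow> 'n gate) \<Rightarrow> 'n \<Rightarrow> nat set" where
  "vars_f 0 lab n = {}"
| "vars_f (Suc d) lab n = (case lab n of
      Lit i b \<Rightarrow> {i}
    | AndG cs \<Rightarrow> (\<Union>c\<in>set cs. vars_f d lab c)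
    | OrG cs \<Rightarrow> (\<Union>c\<in>set cs. vars_f d lab c))"

definition vars :: "'n set \<Rightarrow> ('n \<Rightarrow> 'n gate) \<Rightarrow> 'n \<Rightarrow> nat set" where
  "vars V lab n = vars_f (card V) lab n"

definition logistic_circuit :: "nat \<Rightarrow> 'n set \<Rightarrow> ('n \<Rightarrow> 'n gate) \<Rightarrow> 'n \<Rightarrow> bool" where
  "logistic_circuit k V lab r \<longleftrightarrow> circuit_dag k V lab r
     \<and> (\<exists>cs. lab r = OrG cs)
     \<and> (\<forall>n\<in>V. \<forall>cs. lab n = AndG cs \<longrightarrow>
          (\<forall>i<length cs. \<forall>j<length cs. i \<noteq> j \<longrightarrow>
              vars V lab (cs ! i) \<inter> vars V lab (cs ! j) = {}))
     \<and> (\<forall>n\<in>V. \<forall>cs. lab n = OrG cs \<longrightarrow>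
          (\<forall>a. \<forall>i<length cs. \<forall>j<length cs.
              sat V lab a (cs ! i) \<and> sat V lab a (cs ! j) \<longrightarrow> i = j))"

definition prob_node :: "nat \<Rightarrow> 'n set \<Rightarrow> ('n \<Rightarrow> 'n gate) \<Rightarrow> (nat \<Rightarrow> real) \<Rightarrow> 'n \<Rightarrow> real" where
  "prob_node k V lab x n =
     (\<Sum>S\<in>Pow {..<k}. (\<Prod>i<k. if i \<in> S then x i else 1 - x i)
                        * (if sat V lab (\<lambda>i. i \<in> S) n then 1 else 0))"

definition flow :: "nat \<Rightarrow> 'n set \<Rightarrow> ('n \<Rightarrow> 'n gate) \<Rightarrow> (nat \<Rightarrow> real) \<Rightarrow> 'n \<Rightarrow> 'n \<Rightarrow> real" where
  "flow k V lab x n c =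
     (if prob_node k V lab x n = 0 then 0 else prob_node k V lab x c / prob_node k V lab x n)"

fun g_f :: "nat \<Rightarrow> nat \<Rightarrow> 'n set \<Rightarrow> ('n \<Rightarrow> 'n gate) \<Rightarrow> ('n \<times> nat \<Rightarrow> real)
            \<Rightarrow> (nat \<Rightarrow> real) \<Rightarrow> 'n \<Rightarrow> real" where
  "g_f 0 k V lab \<theta> x n = 0"
| "g_f (Suc d) k V lab \<theta> x n = (case lab n of
      Lit i b \<Rightarrow> 0
    | AndG cs \<Rightarrow> (\<Sum>c\<leftarrow>cs. g_f d k V lab \<theta> x c)
    | OrG cs \<Rightarrow> (\<Sum>i<length cs. flow k V lab x n (cs ! i) * (g_f d k V lab \<theta> x (cs ! i) + \<theta> (n, i))))"

definition weight :: "nat \<Rightarrow> 'n set \<Rightarrow> ('n \<Rightarrow> 'n gate) \<Rightarrow> ('n \<times> nat \<Rightarrow> real)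
            \<Rightarrow> (nat \<Rightarrow> real) \<Rightarrow> 'n \<Rightarrow> real" where
  "weight k V lab \<theta> x n = g_f (card V) k V lab \<theta> x n"

definition lc_prob :: "nat \<Rightarrow> 'n set \<Rightarrow> ('n \<Rightarrow> 'n gate) \<Rightarrow> 'n \<Rightarrow> ('n \<times> nat \<Rightarrow> real)
            \<Rightarrow> (nat \<Rightarrow> real) \<Rightarrow> real" where
  "lc_prob k V lab r \<theta> x = 1 / (1 + exp (- weight k V lab \<theta> x r))"

definition cross_entropy :: "nat \<Rightarrow> 'n set \<Rightarrow> ('n \<Rightarrow> 'n gate) \<Rightarrow> 'n \<Rightarrow> nat
     \<Rightarrow> (nat \<Rightarrow> nat \<Rightarrow> real) \<Rightarrow> (nat \<Rightarrow> real) \<Rightarrow> ('n \<times> nat \<Rightarrow> real) \<Rightarrow> real" where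
  "cross_entropy k V lab r N xs ys \<theta> =
     - (\<Sum>j=1..N. ys j * ln (lc_prob k V lab r \<theta> (xs j))
                 + (1 - ys j) * ln (1 - lc_prob k V lab r \<theta> (xs j)))"

text \<open>Convexity on the whole parameter space (unfolded convex_on UNIV, since functions
carry no real_vector instance).\<close>
definition convex_fun :: "(('a \<Rightarrow> real) \<Rightarrow> real) \<Rightarrow> bool" where
  "convex_fun L \<longleftrightarrow> (\<forall>\<theta>1 \<theta>2 t. 0 \<le> t \<and> t \<le> 1 \<longrightarrow>
      L (\<lambda>w. t * \<theta>1 w + (1 - t) * \<theta>2 w) \<le> t * L \<theta>1 + (1 - t) * L \<theta>2)"

end

theory Submission
  imports Defs
begin

text \<open>The flows depend on the input x but not on the parameters, so the weight of every node
is an affine function of \<theta>. With p = 1 / (1 + exp (- g)), the per-example loss is the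
softplus ln (1 + exp z) evaluated at z = - g (if y = 1) or z = g (if y = 0), and softplus is
convex since its derivative exp z / (1 + exp z) is increasing. A convex function of an
affine map is convex, and so is a finite sum of convex functions.\<close>

definition softplus :: "real \<Rightarrow> real" where
  "softplus z = ln (1 + exp z)"

lemma convex_on_softplus: "convex_on UNIV softplus"
proof (rule convex_on_realI[where f' = "\<lambda>z. exp z / (1 + exp z)"])
  show "connected (UNIV :: real set)" by simp
next
  fix z :: real
  have "((\<lambda>z. ln (1 + exp z)) has_real_derivative (1 / (1 + exp z)) * exp z) (at z)"
    by (rule DERIV_chain2[where f = ln]) (auto intro!: derivative_eq_intros add_pos_pos)
  then show "(softplus has_real_derivative exp z / (1 + exp z)) (at z)"
    unfolding softplus_def by simp
next
  fix a b :: real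
  assume "a \<le> b"
  have "exp z / (1 + exp z) = 1 - 1 / (1 + exp z)" for z :: real
  proof -
    have "0 < 1 + exp z" by (simp add: add_pos_pos)
    then show ?thesis by (simp add: field_simps)
  qed
  moreover have "1 / (1 + exp b) \<le> 1 / (1 + exp a)"
    using \<open>a \<le> b\<close> by (intro divide_left_mono) (simp_all add: add_pos_pos)
  ultimately show "exp a / (1 + exp a) \<le> exp b / (1 + exp b)" by simp
qed

lemma logistic_log_loss_eq_softplus:
  fixes y w :: real
  assumes "y \<in> {0, 1}"
  shows "- (y * ln (1 / (1 + exp (- w))) + (1 - y) * ln (1 - 1 / (1 + exp (- w))))
       = softplus (if y = 1 then - w else w)"
proof -
  have pos: "0 < 1 + exp (- w)" by (simp add: add_pos_pos)
  have "1 - 1 / (1 + exp (- w)) = 1 / (1 + exp w)"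
    using pos by (simp add: field_simps exp_minus)
  then show ?thesis
    using assms pos by (auto simp: softplus_def ln_div add_pos_pos)
qed

lemma sum_list_map_convex_combination:
  fixes t :: real
  shows "(\<Sum>c\<leftarrow>cs. t * f c + (1 - t) * g c) = t * (\<Sum>c\<leftarrow>cs. f c) + (1 - t) * (\<Sum>c\<leftarrow>cs. g c)"
  by (induction cs) (simp_all add: algebra_simps)

lemma g_f_convex_combination:
  "g_f d k V lab (\<lambda>w. t * \<theta>1 w + (1 - t) * \<theta>2 w) x n
   = t * g_f d k V lab \<theta>1 x n + (1 - t) * g_f d k V lab \<theta>2 x n"
proof (induction d arbitrary: n)
  case 0
  then show ?case by simp
next
  case (Suc d)
  have IH: "g_f d k V lab (\<lambda>w. t * \<theta>1 w + (1 - t) * \<theta>2 w) x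
      = (\<lambda>c. t * g_f d k V lab \<theta>1 x c + (1 - t) * g_f d k V lab \<theta>2 x c)"
    using Suc.IH by (rule ext)
  show ?case
  proof (cases "lab n")
    case (Lit i b)
    then show ?thesis by simp
  next
    case (AndG cs)
    then show ?thesis
      by (simp only: g_f.simps gate.case IH sum_list_map_convex_combination)
  next
    case (OrG cs)
    then show ?thesis
      by (simp only: g_f.simps gate.case IH)
        (simp add: sum_distrib_left sum.distrib[symmetric] algebra_simps)
  qed
qed

lemma weight_convex_combination:
  "weight k V lab (\<lambda>w. t * \<theta>1 w + (1 - t) * \<theta>2 w) x n
   = t * weight k V lab \<theta>1 x n + (1 - t) * weight k V lab \<theta>2 x n"
  unfolding weight_def by (rule g_f_convex_combination)

lemma convex_fun_sum:
  fixes f :: "('a \<Rightarrow> real) \<Rightarrow> 'b \<Rightarrow> real"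
  assumes "\<And>j. j \<in> A \<Longrightarrow> convex_fun (\<lambda>\<theta>. f \<theta> j)"
  shows "convex_fun (\<lambda>\<theta>. \<Sum>j\<in>A. f \<theta> j)"
  unfolding convex_fun_def
proof (intro allI impI)
  fix \<theta>1 \<theta>2 :: "'a \<Rightarrow> real" and t :: real
  assume "0 \<le> t \<and> t \<le> 1"
  then have "(\<Sum>j\<in>A. f (\<lambda>w. t * \<theta>1 w + (1 - t) * \<theta>2 w) j)
      \<le> (\<Sum>j\<in>A. t * f \<theta>1 j + (1 - t) * f \<theta>2 j)"
    using assms by (intro sum_mono) (auto simp: convex_fun_def)
  then show "(\<Sum>j\<in>A. f (\<lambda>w. t * \<theta>1 w + (1 - t) * \<theta>2 w) j)
      \<le> t * (\<Sum>j\<in>A. f \<theta>1 j) + (1 - t) * (\<Sum>j\<in>A. f \<theta>2 j)"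
    by (simp add: sum.distrib sum_distrib_left)
qed

lemma convex_fun_convex_on_comp_affine:
  fixes \<phi> :: "real \<Rightarrow> real" and a :: "('a \<Rightarrow> real) \<Rightarrow> real"
  assumes "convex_on UNIV \<phi>"
    and "\<And>\<theta>1 \<theta>2 t. a (\<lambda>w. t * \<theta>1 w + (1 - t) * \<theta>2 w) = t * a \<theta>1 + (1 - t) * a \<theta>2"
  shows "convex_fun (\<lambda>\<theta>. \<phi> (a \<theta>))"
  unfolding convex_fun_def
proof (intro allI impI)
  fix \<theta>1 \<theta>2 :: "'a \<Rightarrow> real" and t :: real
  assume "0 \<le> t \<and> t \<le> 1"
  then have "\<phi> ((1 - t) *\<^sub>R a \<theta>2 + t *\<^sub>R a \<theta>1) \<le> (1 - t) * \<phi> (a \<theta>2) + t * \<phi> (a \<theta>1)"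
    using convex_onD[OF assms(1)] by simp
  then show "\<phi> (a (\<lambda>w. t * \<theta>1 w + (1 - t) * \<theta>2 w)) \<le> t * \<phi> (a \<theta>1) + (1 - t) * \<phi> (a \<theta>2)"
    by (simp only: assms(2)) (simp add: algebra_simps)
qed

lemma cross_entropy_eq_sum_softplus:
  assumes "\<forall>j\<in>{1..N}. ys j \<in> {0, 1}"
  shows "cross_entropy k V lab r N xs ys \<theta>
       = (\<Sum>j=1..N. softplus ((if ys j = 1 then -1 else 1) * weight k V lab \<theta> (xs j) r))"
  unfolding cross_entropy_def sum_negf[symmetric]
proof (rule sum.cong)
  fix j
  assume "j \<in> {1..N}"
  then show "- (ys j * ln (lc_prob k V lab r \<theta> (xs j))
               + (1 - ys j) * ln (1 - lc_prob k V lab r \<theta> (xs j)))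
      = softplus ((if ys j = 1 then -1 else 1) * weight k V lab \<theta> (xs j) r)"
    using assms logistic_log_loss_eq_softplus[of "ys j" "weight k V lab \<theta> (xs j) r"]
    by (simp add: lc_prob_def)
qed simp

theorem corollary1:
  fixes V :: "'n set" and lab :: "'n \<Rightarrow> 'n gate" and r :: 'n
    and k N :: nat and xs :: "nat \<Rightarrow> nat \<Rightarrow> real" and ys :: "nat \<Rightarrow> real"
  assumes "logistic_circuit k V lab r"
    and "\<forall>j\<in>{1..N}. \<forall>i<k. 0 \<le> xs j i \<and> xs j i \<le> 1"
    and "\<forall>j\<in>{1..N}. ys j \<in> {0, 1}"
  shows "convex_fun (cross_entropy k V lab r N xs ys)"
proof -
  have affine_term: "convex_fun (\<lambda>\<theta>. softplus (s * weight k V lab \<theta> (xs j) r))"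
    for s :: real and j
    by (rule convex_fun_convex_on_comp_affine[OF convex_on_softplus])
      (simp only: weight_convex_combination, simp add: algebra_simps)
  have "cross_entropy k V lab r N xs ys = (\<lambda>\<theta>. \<Sum>j=1..N.
      softplus ((if ys j = 1 then -1 else 1) * weight k V lab \<theta> (xs j) r))"
    using cross_entropy_eq_sum_softplus[OF assms(3)] by (rule ext)
  then show ?thesis
    using affine_term by (simp add: convex_fun_sum)
qed

end
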